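(* Suppose an SCC $F:\Theta\to 2^Z\setminus\{\emptyset\}$ is mixed-Nash-A-implemented by $\mathcal M=\langle M,g\rangle$. Then $g(M)\subseteq\Delta(Z^* )$.
   Context: Standing setup: $\mathcal I=\{1,\dots,I\}$ finite, $I\ge 3$; $\Theta$ finite or countably infinite; $Z$ finite; $Y=\Delta(Z)$; $u_i^\theta:Z\to\mathbb R$, $U_i^\theta(y)=\sum_zy_zu_i^\theta(z)$. A mechanism $\mathcal M=\langle M=\times_iM_i,g:M\to Y\rangle$ has countable $M_i$; $g(\lambda)$ is the induced lottery; $MNE^{(\mathcal M,\theta)}$ is the set of mixed Nash equilibria at $\theta$. $F$ is mixed-Nash-A-implemented by $\mathcal M$ if $\bigcup_{\lambda\in MNE^{(\mathcal M,\theta)}}\mathrm{SUPP}(g[\lambda])=F(\theta)$ for all $\theta$. A nonempty $E\subseteq Z$ is an $i$-$\theta$-max set if $E\subseteq\arg\max_{z\in E}u_i^\theta(z)$ and $E\subseteq\arg\max_{z\in Z}u_j^\theta(z)$ for all $j\ne i$; an $i$-max set if it is such for some $\theta$. $Z^*=\bigcup_{\theta\in\Theta}F(\theta)$ if $Z$ is an $i$-max set for some $i\in\mathcal I$, and $Z^*=Z$ otherwise. *)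

theory Defs
  imports "HOL-Probability.Product_PMF"
begin

text \<open>Lotteries Y = Delta(Z) are represented by 'z pmf. A mechanism is given by
  message spaces Ms i :: 'm set (countable) and an outcome function
  g :: ('i \<Rightarrow> 'm) \<Rightarrow> 'z pmf (only relevant on message profiles in the product).\<close>

definition exp_util :: "('z::finite \<Rightarrow> real) \<Rightarrow> 'z pmf \<Rightarrow> real" where
  "exp_util v y = (\<Sum>z\<in>UNIV. pmf y z * v z)"

definition mixed_profile :: "('i \<Rightarrow> 'm set) \<Rightarrow> ('i \<Rightarrow> 'm pmf) \<Rightarrow> bool" where
  "mixed_profile Ms lam \<longleftrightarrow> (\<forall>i. set_pmf (lam i) \<subseteq> Ms i)"

definition induced_lottery ::
  "(('i::finite \<Rightarrow> 'm) \<Rightarrow> 'z pmf) \<Rightarrow> ('i \<Rightarrow> 'm pmf) \<Rightarrow> 'z pmf" where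
  "induced_lottery g lam = bind_pmf (Pi_pmf UNIV undefined lam) g"

definition MNE ::
  "('i::finite \<Rightarrow> 'm set) \<Rightarrow> (('i \<Rightarrow> 'm) \<Rightarrow> 'z::finite pmf) \<Rightarrow> ('i \<Rightarrow> 'th \<Rightarrow> 'z \<Rightarrow> real)
   \<Rightarrow> 'th \<Rightarrow> ('i \<Rightarrow> 'm pmf) set" where
  "MNE Ms g u \<theta> = {lam. mixed_profile Ms lam \<and>
     (\<forall>i \<mu>. set_pmf \<mu> \<subseteq> Ms i \<longrightarrow>
        exp_util (u i \<theta>) (induced_lottery g (lam(i := \<mu>)))
          \<le> exp_util (u i \<theta>) (induced_lottery g lam))}"

definition mixed_Nash_A_implements ::
  "('th \<Rightarrow> 'z set) \<Rightarrow> ('i::finite \<Rightarrow> 'm set) \<Rightarrow> (('i \<Rightarrow> 'm) \<Rightarrow> 'z::finite pmf)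
   \<Rightarrow> ('i \<Rightarrow> 'th \<Rightarrow> 'z \<Rightarrow> real) \<Rightarrow> bool" where
  "mixed_Nash_A_implements F Ms g u \<longleftrightarrow>
     (\<forall>\<theta>. (\<Union>lam\<in>MNE Ms g u \<theta>. set_pmf (induced_lottery g lam)) = F \<theta>)"

definition is_i_theta_max_set ::
  "('i \<Rightarrow> 'th \<Rightarrow> 'z \<Rightarrow> real) \<Rightarrow> 'i \<Rightarrow> 'th \<Rightarrow> 'z set \<Rightarrow> bool" where
  "is_i_theta_max_set u i \<theta> E \<longleftrightarrow> E \<noteq> {} \<and>
     (\<forall>z\<in>E. \<forall>z'\<in>E. u i \<theta> z' \<le> u i \<theta> z) \<and>
     (\<forall>j. j \<noteq> i \<longrightarrow> (\<forall>z\<in>E. \<forall>z'. u j \<theta> z' \<le> u j \<theta> z))"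

definition is_i_max_set :: "('i \<Rightarrow> 'th \<Rightarrow> 'z \<Rightarrow> real) \<Rightarrow> 'i \<Rightarrow> 'z set \<Rightarrow> bool" where
  "is_i_max_set u i E \<longleftrightarrow> (\<exists>\<theta>. is_i_theta_max_set u i \<theta> E)"

definition Zstar :: "('i \<Rightarrow> 'th \<Rightarrow> 'z \<Rightarrow> real) \<Rightarrow> ('th \<Rightarrow> 'z set) \<Rightarrow> 'z set" where
  "Zstar u F = (if \<exists>i. is_i_max_set u i UNIV then (\<Union>\<theta>. F \<theta>) else UNIV)"

end

theory Submission
  imports Defs
begin

text \<open>If \<open>Z\<close> is an \<open>i\<close>-\<open>\<theta>\<close>-max set, every agent is indifferent among all outcomes at \<open>\<theta>\<close>,
  so every pure message profile is a Nash equilibrium at \<open>\<theta>\<close>. A-implementation then puts the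
  support of its outcome into \<open>F \<theta>\<close>, which lies in \<open>Z\<^sup>*\<close>. Otherwise \<open>Z\<^sup>* = Z\<close> and there
  is nothing to prove.\<close>

lemma exp_util_const:
  fixes v :: "'z::finite \<Rightarrow> real"
  assumes "\<And>z. v z = c"
  shows "exp_util v y = c"
proof -
  have "exp_util v y = (\<Sum>z\<in>UNIV. pmf y z) * c"
    unfolding exp_util_def using assms by (simp add: sum_distrib_right)
  also have "(\<Sum>z\<in>UNIV. pmf y z) = 1"
    by (rule sum_pmf_eq_1) auto
  finally show ?thesis by simp
qed

lemma is_i_theta_max_set_UNIV_const:
  assumes "is_i_theta_max_set u i \<theta> UNIV"
  shows "u k \<theta> z = u k \<theta> z'"
  using assms unfolding is_i_theta_max_set_def by (metis UNIV_I order_antisym)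

lemma induced_lottery_pure:
  "induced_lottery g (\<lambda>i. return_pmf (m i)) = g m"
  unfolding induced_lottery_def by (simp add: bind_return_pmf)

lemma pure_profile_in_MNE_if_indifferent:
  assumes indiff: "\<And>i z z'. u i \<theta> z = u i \<theta> z'"
    and m: "m \<in> (\<Pi> i\<in>UNIV. Ms i)"
  shows "(\<lambda>i. return_pmf (m i)) \<in> MNE Ms g u \<theta>"
proof -
  have "exp_util (u i \<theta>) y = u i \<theta> undefined" for i y
    by (rule exp_util_const) (rule indiff)
  then show ?thesis
    using m unfolding MNE_def mixed_profile_def by (simp add: Pi_iff)
qed

lemma MNE_support_subset:
  assumes "mixed_Nash_A_implements F Ms g u" and "lam \<in> MNE Ms g u \<theta>"
  shows "set_pmf (induced_lottery g lam) \<subseteq> F \<theta>"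
  using assms unfolding mixed_Nash_A_implements_def by blast

theorem lemma5:
  fixes F :: "'th::countable \<Rightarrow> 'z::finite set"
    and Ms :: "'i::finite \<Rightarrow> 'm set"
    and g :: "('i \<Rightarrow> 'm) \<Rightarrow> 'z pmf"
    and u :: "'i \<Rightarrow> 'th \<Rightarrow> 'z \<Rightarrow> real"
  assumes "CARD('i) \<ge> 3"
    and "\<And>\<theta>. F \<theta> \<noteq> {}"
    and "\<And>i. countable (Ms i)"
    and "mixed_Nash_A_implements F Ms g u"
  shows "\<forall>m\<in>(\<Pi> i\<in>UNIV. Ms i). set_pmf (g m) \<subseteq> Zstar u F"
proof (cases "\<exists>i. is_i_max_set u i UNIV")
  case False
  then show ?thesis unfolding Zstar_def by simp
next
  case True
  then obtain i \<theta> where "is_i_theta_max_set u i \<theta> UNIV"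
    unfolding is_i_max_set_def by blast
  then have indiff: "\<And>k z z'. u k \<theta> z = u k \<theta> z'"
    by (rule is_i_theta_max_set_UNIV_const)
  show ?thesis
  proof
    fix m assume "m \<in> (\<Pi> i\<in>UNIV. Ms i)"
    with indiff have "(\<lambda>i. return_pmf (m i)) \<in> MNE Ms g u \<theta>"
      by (rule pure_profile_in_MNE_if_indifferent)
    with assms(4) have "set_pmf (g m) \<subseteq> F \<theta>"
      using MNE_support_subset induced_lottery_pure by metis
    then show "set_pmf (g m) \<subseteq> Zstar u F"
      using True unfolding Zstar_def by auto
  qed
qed

end
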